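(* Let $\alpha\ge-1$ and $A\subseteq\mathbb{N}$. Then the set of all cluster points of the sequence $\left(\frac{A_\alpha(n)}{\mathbb{N}_\alpha(n)}\right)_{n\ge1}$ is the whole interval $[\underline{d}_\alpha(A),\overline{d}_\alpha(A)]$.
   Context: $\mathbb{N}=\{1,2,3,\dots\}$. For $\alpha\ge-1$ and $A\subseteq\mathbb{N}$ put $A_\alpha(n)=\sum_{k=1}^n\chi_A(k)k^\alpha$ (so $\mathbb{N}_\alpha(n)=\sum_{k=1}^nk^\alpha$), $\underline{d}_\alpha(A)=\liminf_{n\to\infty}\frac{A_\alpha(n)}{\mathbb{N}_\alpha(n)}$ and $\overline{d}_\alpha(A)=\limsup_{n\to\infty}\frac{A_\alpha(n)}{\mathbb{N}_\alpha(n)}$. *)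

theory Defs
  imports "HOL-Analysis.Analysis"
begin

definition wcount :: "real \<Rightarrow> nat set \<Rightarrow> nat \<Rightarrow> real" where
  "wcount \<alpha> A n = (\<Sum>k\<in>{1..n}. (if k \<in> A then real k powr \<alpha> else 0))"

definition wratio :: "real \<Rightarrow> nat set \<Rightarrow> nat \<Rightarrow> real" where
  "wratio \<alpha> A n = wcount \<alpha> A n / wcount \<alpha> UNIV n"

definition lower_dens :: "real \<Rightarrow> nat set \<Rightarrow> ereal" where
  "lower_dens \<alpha> A = liminf (\<lambda>n. ereal (wratio \<alpha> A n))"

definition upper_dens :: "real \<Rightarrow> nat set \<Rightarrow> ereal" where
  "upper_dens \<alpha> A = limsup (\<lambda>n. ereal (wratio \<alpha> A n))"

definition cluster_point :: "(nat \<Rightarrow> real) \<Rightarrow> real \<Rightarrow> bool" where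
  "cluster_point x L \<longleftrightarrow> (\<forall>\<epsilon>>0. \<forall>N. \<exists>n\<ge>N. \<bar>x n - L\<bar> < \<epsilon>)"

end

theory Submission
  imports Defs
begin

text \<open>
  Consecutive ratios differ by at most the share \<open>(n+1)\<^sup>\<alpha> / N\<^sub>\<alpha>(n+1)\<close> of the newest
  term, and this share is \<open>O(1/n)\<close> for every real \<open>\<alpha>\<close>: compare \<open>N\<^sub>\<alpha>(m)\<close> with the upper
  half of its terms when \<open>\<alpha> \<ge> 0\<close>, and with \<open>m\<close> copies of its smallest term when \<open>\<alpha> < 0\<close>. A real sequence whose steps tend to \<open>0\<close> and
  which is infinitely often below \<open>L + \<epsilon>\<close> and infinitely often above \<open>L - \<epsilon>\<close> must pass
  within \<open>\<epsilon>\<close> of \<open>L\<close> infinitely often, so every level between the lower and upper limit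
  is a cluster point; the converse inclusion holds for every sequence.
\<close>

lemma cluster_point_iff_frequently:
  "cluster_point x L \<longleftrightarrow> (\<forall>e>0. \<exists>\<^sub>F n in sequentially. \<bar>x n - L\<bar> < e)"
  by (simp add: cluster_point_def frequently_sequentially)

lemma liminf_le_cluster_point:
  fixes x :: "nat \<Rightarrow> real"
  assumes "cluster_point x L"
  shows "liminf (\<lambda>n. ereal (x n)) \<le> ereal L"
proof (rule ccontr)
  assume "\<not> ?thesis"
  then obtain r where r: "ereal L < ereal r" "ereal r < liminf (\<lambda>n. ereal (x n))"
    using ereal_dense2 not_le by metis
  have "\<exists>\<^sub>F n in sequentially. \<bar>x n - L\<bar> < r - L"
    using assms r(1) by (simp add: cluster_point_iff_frequently)
  moreover have "\<forall>\<^sub>F n in sequentially. r < x n"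
    using r(2) less_LiminfD by fastforce
  ultimately have "\<exists>\<^sub>F n in sequentially. r < x n \<and> \<bar>x n - L\<bar> < r - L"
    by (rule frequently_eventually_conj)
  then show False
    by (auto dest: frequently_ex)
qed

lemma cluster_point_le_limsup:
  fixes x :: "nat \<Rightarrow> real"
  assumes "cluster_point x L"
  shows "ereal L \<le> limsup (\<lambda>n. ereal (x n))"
proof (rule ccontr)
  assume "\<not> ?thesis"
  then obtain r where r: "limsup (\<lambda>n. ereal (x n)) < ereal r" "ereal r < ereal L"
    using ereal_dense2 not_le by metis
  have "\<exists>\<^sub>F n in sequentially. \<bar>x n - L\<bar> < L - r"
    using assms r(2) by (simp add: cluster_point_iff_frequently)
  moreover have "\<forall>\<^sub>F n in sequentially. x n < r"
    using r(1) Limsup_lessD by fastforce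
  ultimately have "\<exists>\<^sub>F n in sequentially. x n < r \<and> \<bar>x n - L\<bar> < L - r"
    by (rule frequently_eventually_conj)
  then show False
    by (auto dest: frequently_ex)
qed

lemma frequently_less_if_liminf_less:
  fixes x :: "nat \<Rightarrow> real"
  assumes "liminf (\<lambda>n. ereal (x n)) < ereal c"
  shows "\<exists>\<^sub>F n in sequentially. x n < c"
  using assms Liminf_bounded[where F = sequentially and X = "\<lambda>n. ereal (x n)" and C = "ereal c"]
  by (auto simp: frequently_def not_less)

lemma frequently_greater_if_less_limsup:
  fixes x :: "nat \<Rightarrow> real"
  assumes "ereal c < limsup (\<lambda>n. ereal (x n))"
  shows "\<exists>\<^sub>F n in sequentially. c < x n"
  using assms Limsup_bounded[where F = sequentially and X = "\<lambda>n. ereal (x n)" and C = "ereal c"]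
  by (auto simp: frequently_def not_less)

lemma small_steps_reach_level:
  fixes x :: "nat \<Rightarrow> real"
  assumes "m \<le> n" "x m \<le> c" "c \<le> x n" "0 < e"
    and "\<And>k. m \<le> k \<Longrightarrow> k < n \<Longrightarrow> \<bar>x (Suc k) - x k\<bar> < e"
  shows "\<exists>k\<in>{m..n}. \<bar>x k - c\<bar> < e"
  using assms
proof (induction n)
  case 0
  then show ?case by auto
next
  case (Suc n)
  show ?case
  proof (cases "m = Suc n")
    case True
    then show ?thesis using Suc.prems by auto
  next
    case False
    with Suc.prems have "m \<le> n" by auto
    show ?thesis
    proof (cases "c \<le> x n")
      case True
      then show ?thesis
        using Suc.IH[OF \<open>m \<le> n\<close>] Suc.prems by fastforce
    next
      case False
      then have "\<bar>x (Suc n) - c\<bar> < e"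
        using Suc.prems(2-4) Suc.prems(5)[of n] \<open>m \<le> n\<close> by auto
      then show ?thesis using \<open>m \<le> n\<close> by auto
    qed
  qed
qed

lemma cluster_point_iff_between_liminf_limsup:
  fixes x :: "nat \<Rightarrow> real"
  assumes steps: "(\<lambda>n. x (Suc n) - x n) \<longlonglongrightarrow> 0"
  shows "cluster_point x L \<longleftrightarrow>
    liminf (\<lambda>n. ereal (x n)) \<le> ereal L \<and> ereal L \<le> limsup (\<lambda>n. ereal (x n))"
proof
  assume "cluster_point x L"
  then show "liminf (\<lambda>n. ereal (x n)) \<le> ereal L \<and> ereal L \<le> limsup (\<lambda>n. ereal (x n))"
    using liminf_le_cluster_point cluster_point_le_limsup by blast
next
  assume bounds: "liminf (\<lambda>n. ereal (x n)) \<le> ereal L \<and> ereal L \<le> limsup (\<lambda>n. ereal (x n))"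
  show "cluster_point x L"
    unfolding cluster_point_def
  proof (intro allI impI)
    fix e :: real and N :: nat
    assume "0 < e"
    obtain M0 where "\<And>k. M0 \<le> k \<Longrightarrow> \<bar>x (Suc k) - x k\<bar> < e"
      using steps \<open>0 < e\<close> by (auto simp: LIMSEQ_iff)
    then obtain M where M: "N \<le> M" "\<And>k. M \<le> k \<Longrightarrow> \<bar>x (Suc k) - x k\<bar> < e"
      by (metis max.cobounded1 max.cobounded2 order_trans)
    have "ereal L < ereal (L + e)" "ereal (L - e) < ereal L"
      using \<open>0 < e\<close> by simp_all
    then have "liminf (\<lambda>n. ereal (x n)) < ereal (L + e)" "ereal (L - e) < limsup (\<lambda>n. ereal (x n))"
      using bounds by (meson le_less_trans less_le_trans)+
    then have "\<exists>\<^sub>F n in sequentially. x n < L + e" "\<exists>\<^sub>F n in sequentially. L - e < x n"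
      by (simp_all add: frequently_less_if_liminf_less frequently_greater_if_less_limsup)
    then obtain n1 n2 where n1: "M \<le> n1" "x n1 < L + e" and n2: "M \<le> n2" "L - e < x n2"
      unfolding frequently_sequentially by blast
    show "\<exists>n\<ge>N. \<bar>x n - L\<bar> < e"
    proof (cases "\<bar>x n1 - L\<bar> < e \<or> \<bar>x n2 - L\<bar> < e")
      case True
      then show ?thesis using n1(1) n2(1) M(1) by (meson order_trans)
    next
      case False
      then have "x n1 \<le> L" "L \<le> x n2" using n1 n2 by auto
      consider "n1 \<le> n2" | "n2 \<le> n1" by linarith
      then obtain k where "min n1 n2 \<le> k" "\<bar>x k - L\<bar> < e"
      proof cases
        case 1
        have "\<And>k. n1 \<le> k \<Longrightarrow> k < n2 \<Longrightarrow> \<bar>x (Suc k) - x k\<bar> < e"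
          using M(2) n1(1) by auto
        then obtain k where "k \<in> {n1..n2}" "\<bar>x k - L\<bar> < e"
          using small_steps_reach_level[of n1 n2 x L e] 1 \<open>x n1 \<le> L\<close> \<open>L \<le> x n2\<close> \<open>0 < e\<close>
          by blast
        then show ?thesis using that by auto
      next
        case 2
        have "\<And>k. n2 \<le> k \<Longrightarrow> k < n1 \<Longrightarrow> \<bar>- x (Suc k) - - x k\<bar> < e"
          using M(2) n2(1) by (simp add: abs_minus_commute)
        then obtain k where "k \<in> {n2..n1}" "\<bar>- x k - - L\<bar> < e"
          using small_steps_reach_level[of n2 n1 "\<lambda>k. - x k" "- L" e] 2
            \<open>x n1 \<le> L\<close> \<open>L \<le> x n2\<close> \<open>0 < e\<close>
          by auto
        then show ?thesis using that by (auto simp: abs_minus_commute)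
      qed
      moreover have "N \<le> min n1 n2" using n1(1) n2(1) M(1) by simp
      ultimately show ?thesis by (meson order_trans)
    qed
  qed
qed

lemma wcount_Suc:
  "wcount \<alpha> A (Suc n) = wcount \<alpha> A n + (if Suc n \<in> A then real (Suc n) powr \<alpha> else 0)"
  by (simp add: wcount_def)

lemma wcount_nonneg: "0 \<le> wcount \<alpha> A n"
  unfolding wcount_def by (rule sum_nonneg) auto

lemma wcount_le_wcount_UNIV: "wcount \<alpha> A n \<le> wcount \<alpha> UNIV n"
  unfolding wcount_def by (rule sum_mono) auto

lemma wcount_UNIV_lower_bound_nonneg:
  assumes "0 \<le> \<alpha>"
  shows "real m * real m powr \<alpha> \<le> 2 powr (\<alpha> + 1) * wcount \<alpha> UNIV m"
proof (cases "m = 0")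
  case True
  then show ?thesis by (simp add: wcount_def)
next
  case False
  define K where "K = {m - m div 2..m}"
  have "m \<le> 2 * card K"
    unfolding K_def by simp
  then have "real m / 2 \<le> real (card K)"
    by linarith
  then have "real m / 2 * (real m / 2) powr \<alpha> \<le> real (card K) * (real m / 2) powr \<alpha>"
    by (rule mult_right_mono) simp
  also have "\<dots> \<le> (\<Sum>k\<in>K. real k powr \<alpha>)"
    by (rule sum_bounded_below, rule powr_mono2) (auto simp: K_def assms)
  also have "\<dots> \<le> (\<Sum>k\<in>{1..m}. real k powr \<alpha>)"
    using False by (intro sum_mono2) (auto simp: K_def)
  also have "\<dots> = wcount \<alpha> UNIV m"
    by (simp add: wcount_def)
  finally have "real m / 2 * (real m / 2) powr \<alpha> \<le> wcount \<alpha> UNIV m" .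
  moreover have "real m / 2 * (real m / 2) powr \<alpha> = real m * real m powr \<alpha> / 2 powr (\<alpha> + 1)"
    by (simp add: powr_divide powr_add)
  ultimately show ?thesis
    by (simp add: divide_le_eq mult.commute)
qed

lemma wcount_UNIV_lower_bound_nonpos:
  assumes "\<alpha> \<le> 0"
  shows "real m * real m powr \<alpha> \<le> wcount \<alpha> UNIV m"
proof -
  have "real m * real m powr \<alpha> = (\<Sum>k\<in>{1..m}. real m powr \<alpha>)"
    by simp
  also have "\<dots> \<le> (\<Sum>k\<in>{1..m}. real k powr \<alpha>)"
    by (intro sum_mono powr_mono2') (use assms in auto)
  finally show ?thesis
    by (simp add: wcount_def)
qed

lemma powr_div_wcount_UNIV_le:
  assumes "0 < m"
  shows "real m powr \<alpha> / wcount \<alpha> UNIV m \<le> max 1 (2 powr (\<alpha> + 1)) / real m"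
proof -
  have "real m * real m powr \<alpha> \<le> max 1 (2 powr (\<alpha> + 1)) * wcount \<alpha> UNIV m"
  proof (cases "0 \<le> \<alpha>")
    case True
    have "2 powr (\<alpha> + 1) * wcount \<alpha> UNIV m \<le> max 1 (2 powr (\<alpha> + 1)) * wcount \<alpha> UNIV m"
      by (intro mult_right_mono) (simp_all add: wcount_nonneg)
    then show ?thesis
      using wcount_UNIV_lower_bound_nonneg[OF True, of m] by linarith
  next
    case False
    have "wcount \<alpha> UNIV m \<le> max 1 (2 powr (\<alpha> + 1)) * wcount \<alpha> UNIV m"
      using mult_right_mono[of 1 "max 1 (2 powr (\<alpha> + 1))"] by (simp add: wcount_nonneg)
    then show ?thesis
      using wcount_UNIV_lower_bound_nonpos[of \<alpha> m] False by linarith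
  qed
  moreover have "0 < wcount \<alpha> UNIV m"
    using assms unfolding wcount_def by (intro sum_pos) auto
  ultimately show ?thesis
    using assms by (simp add: field_simps)
qed

lemma abs_add_frac_diff_le:
  fixes a b c w :: real
  assumes "0 \<le> a" "a \<le> b" "0 \<le> c" "c \<le> w" "0 < w"
  shows "\<bar>(a + c) / (b + w) - a / b\<bar> \<le> w / (b + w)"
proof (cases "b = 0")
  case True
  then show ?thesis using assms by auto
next
  case False
  with assms have "0 < b" by auto
  have "\<bar>c * b - a * w\<bar> \<le> w * b"
  proof -
    have "c * b \<le> w * b" "a * w \<le> b * w"
      using assms \<open>0 < b\<close> by (simp_all add: mult_right_mono)
    moreover have "0 \<le> c * b" "0 \<le> a * w"
      using assms \<open>0 < b\<close> by simp_all
    ultimately show ?thesis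
      by (simp only: abs_le_iff mult.commute[of b w]) linarith
  qed
  have "(a + c) / (b + w) - a / b = (c * b - a * w) / (b * (b + w))"
    using \<open>0 < b\<close> assms by (simp add: field_simps)
  also have "\<bar>\<dots>\<bar> = \<bar>c * b - a * w\<bar> / (b * (b + w))"
    using \<open>0 < b\<close> assms by simp
  also have "\<dots> \<le> w * b / (b * (b + w))"
    using \<open>\<bar>c * b - a * w\<bar> \<le> w * b\<close> \<open>0 < b\<close> assms by (intro divide_right_mono) simp_all
  also have "\<dots> = w / (b + w)"
    using \<open>0 < b\<close> by simp
  finally show ?thesis .
qed

lemma wratio_step_le:
  "\<bar>wratio \<alpha> A (Suc n) - wratio \<alpha> A n\<bar> \<le> real (Suc n) powr \<alpha> / wcount \<alpha> UNIV (Suc n)"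
  unfolding wratio_def wcount_Suc[of \<alpha> A] wcount_Suc[of \<alpha> UNIV] if_P[OF UNIV_I]
  by (rule abs_add_frac_diff_le) (auto simp: wcount_nonneg wcount_le_wcount_UNIV)

lemma wratio_steps_tendsto_zero:
  "(\<lambda>n. wratio \<alpha> A (Suc n) - wratio \<alpha> A n) \<longlonglongrightarrow> 0"
proof (rule Lim_null_comparison)
  show "\<forall>\<^sub>F n in sequentially.
    norm (wratio \<alpha> A (Suc n) - wratio \<alpha> A n) \<le> max 1 (2 powr (\<alpha> + 1)) / real (Suc n)"
  proof (intro always_eventually allI)
    fix n
    have "norm (wratio \<alpha> A (Suc n) - wratio \<alpha> A n) \<le> real (Suc n) powr \<alpha> / wcount \<alpha> UNIV (Suc n)"
      using wratio_step_le by simp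
    also have "\<dots> \<le> max 1 (2 powr (\<alpha> + 1)) / real (Suc n)"
      by (rule powr_div_wcount_UNIV_le) simp
    finally show "norm (wratio \<alpha> A (Suc n) - wratio \<alpha> A n) \<le> max 1 (2 powr (\<alpha> + 1)) / real (Suc n)" .
  qed
  show "(\<lambda>n. max 1 (2 powr (\<alpha> + 1)) / real (Suc n)) \<longlonglongrightarrow> 0"
    by (rule LIMSEQ_Suc) (rule lim_const_over_n)
qed

theorem lemma4p1:
  fixes \<alpha> :: real and A :: "nat set"
  assumes "\<alpha> \<ge> -1"
  shows "{L. cluster_point (wratio \<alpha> A) L} =
         {L. lower_dens \<alpha> A \<le> ereal L \<and> ereal L \<le> upper_dens \<alpha> A}"
  unfolding lower_dens_def upper_dens_def
  using cluster_point_iff_between_liminf_limsup[OF wratio_steps_tendsto_zero] by simp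

end
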